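(* Let $X$ be an alphabet with $k\ge 1$ letters and let $n\ge 1$. Every word $w\in X^*$ with $|w|>k\cdot(n-1)^k$ (indeed every word with $|w|>\sum_{i=1}^k (n-1)^i$) has a position $j$ with the following property: for every complete ordered DFA $\mathcal{B}$ over $X$ with at most $n$ states and every state $q$ of $\mathcal{B}$, in the run of $\mathcal{B}$ on $w$ starting in $q$, the state reached before reading the $j$-th letter of $w$ equals the state reached after reading it (i.e. the run cycles at position $j$).
   Context: A DFA is ordered if its states can be linearly ordered so that every transition $p\xrightarrow{a}q$ satisfies $p\le q$. Complete means every state has exactly one outgoing transition per letter. *)

theory Defs
  imports Main
begin

text \<open>States are drawn from a finite,
nonempty set Q of natural numbers (any finite state set can be so encoded); the
transition function delta is total on Q x X with values in Q (complete), and there is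
a linear order r on Q such that every transition p -a-> q satisfies p <= q in r
(ordered).  Initial and final states play no role in the statement and are omitted.\<close>

definition ordered_complete_dfa :: "'a set \<Rightarrow> nat set \<Rightarrow> (nat \<Rightarrow> 'a \<Rightarrow> nat) \<Rightarrow> bool" where
  "ordered_complete_dfa X Q \<delta> \<longleftrightarrow>
     finite Q \<and> Q \<noteq> {} \<and>
     (\<forall>q\<in>Q. \<forall>a\<in>X. \<delta> q a \<in> Q) \<and>
     (\<exists>r. linear_order_on Q r \<and> (\<forall>q\<in>Q. \<forall>a\<in>X. (q, \<delta> q a) \<in> r))"

definition run :: "(nat \<Rightarrow> 'a \<Rightarrow> nat) \<Rightarrow> nat \<Rightarrow> 'a list \<Rightarrow> nat" where
  "run \<delta> q u = foldl \<delta> q u"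

text \<open>Position j (0-based, i.e. the (j+1)-th letter of w) is a cycle position for all
complete ordered DFAs over X with at most n states: for every such DFA and every state q,
the state before reading letter w!j equals the state after reading it.\<close>
definition cycles_at :: "'a set \<Rightarrow> nat \<Rightarrow> 'a list \<Rightarrow> nat \<Rightarrow> bool" where
  "cycles_at X n w j \<longleftrightarrow>
     (\<forall>Q \<delta>. ordered_complete_dfa X Q \<delta> \<and> card Q \<le> n \<longrightarrow>
        (\<forall>q\<in>Q. \<delta> (run \<delta> q (take j w)) (w ! j) = run \<delta> q (take j w)))"

end

theory Submission
  imports Defs
begin

text \<open>
In an ordered DFA with at most \<open>n\<close> states every run changes its state at most \<open>n - 1\<close>
times, since each change moves strictly up the order. So if no position of \<open>w\<close> is a cycle
position, every position \<open>j\<close> is witnessed by a run that changes state at \<open>j\<close> and has made at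
most \<open>n - 1\<close> changes up to and including \<open>j\<close>. Such words are short: split \<open>w\<close> at the first
occurrence \<open>p\<close> of the letter that occurs last for the first time. The prefix before \<open>p\<close> uses
one letter less; on the suffix after \<open>p\<close> every witnessing run has already changed state within
the prefix up to \<open>p\<close> (otherwise all letters would fix its start state), so the suffix admits
one change less. Induction on the number of letters and changes gives
\<open>|w| \<le> (\<Sum>i=1..k. (n - 1)^i) \<le> k (n - 1)^k\<close>.
\<close>

lemma run_Nil [simp]: "run \<delta> q [] = q"
  by (simp add: run_def)

lemma run_Cons [simp]: "run \<delta> q (a # u) = run \<delta> (\<delta> q a) u"
  by (simp add: run_def)

lemma run_append [simp]: "run \<delta> q (u @ v) = run \<delta> (run \<delta> q u) v"
  by (simp add: run_def)

lemma run_fixed: "\<forall>a\<in>set u. \<delta> q a = q \<Longrightarrow> run \<delta> q u = q"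
  by (induction u) auto

fun state_changes :: "(nat \<Rightarrow> 'a \<Rightarrow> nat) \<Rightarrow> nat \<Rightarrow> 'a list \<Rightarrow> nat" where
  "state_changes \<delta> q [] = 0"
| "state_changes \<delta> q (a # u) = (if \<delta> q a = q then 0 else 1) + state_changes \<delta> (\<delta> q a) u"

lemma state_changes_append:
  "state_changes \<delta> q (u @ v) = state_changes \<delta> q u + state_changes \<delta> (run \<delta> q u) v"
  by (induction u arbitrary: q) auto

lemma state_changes_eq_0_iff: "state_changes \<delta> q u = 0 \<longleftrightarrow> (\<forall>a\<in>set u. \<delta> q a = q)"
  by (induction u arbitrary: q) auto

definition changes_at :: "(nat \<Rightarrow> 'a \<Rightarrow> nat) \<Rightarrow> nat \<Rightarrow> 'a list \<Rightarrow> nat \<Rightarrow> bool" where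
  "changes_at \<delta> q w j \<longleftrightarrow> \<delta> (run \<delta> q (take j w)) (w ! j) \<noteq> run \<delta> q (take j w)"

lemma state_changes_take_Suc:
  "j < length w \<Longrightarrow> state_changes \<delta> q (take (Suc j) w)
     = state_changes \<delta> q (take j w) + (if changes_at \<delta> q w j then 1 else 0)"
  by (simp add: take_Suc_conv_app_nth state_changes_append changes_at_def)

lemma changes_at_append:
  "changes_at \<delta> q (u @ v) (length u + j) \<longleftrightarrow> changes_at \<delta> (run \<delta> q u) v j"
  by (simp add: changes_at_def)

lemma not_changes_at_if_fixed:
  assumes "\<forall>a\<in>set w. \<delta> q a = q" and "j < length w"
  shows "\<not> changes_at \<delta> q w j"
proof -
  have "run \<delta> q (take j w) = q"
    using assms(1) by (intro run_fixed) (meson in_set_takeD)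
  then show ?thesis
    using assms by (simp add: changes_at_def)
qed

lemma state_changes_less_card_upset:
  assumes "finite Q" and "partial_order_on Q r"
    and "\<forall>p\<in>Q. \<forall>a\<in>X. \<delta> p a \<in> Q \<and> (p, \<delta> p a) \<in> r"
    and "q \<in> Q" and "u \<in> lists X"
  shows "state_changes \<delta> q u < card {p\<in>Q. (q, p) \<in> r}"
  using assms(4,5)
proof (induction u arbitrary: q)
  case Nil
  then have "q \<in> {p\<in>Q. (q, p) \<in> r}"
    using assms(2) by (auto simp: partial_order_on_def preorder_on_def refl_on_def)
  then show ?case
    using assms(1) by (auto simp: card_gt_0_iff)
next
  case (Cons a u)
  define q' where "q' = \<delta> q a"
  have q': "q' \<in> Q" "(q, q') \<in> r"
    using Cons.prems assms(3) by (auto simp: q'_def)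
  have IH: "state_changes \<delta> q' u < card {p\<in>Q. (q', p) \<in> r}"
    using Cons q' by simp
  show ?case
  proof (cases "q' = q")
    case True
    then show ?thesis using IH by (simp add: q'_def)
  next
    case False
    have trans: "trans r" and antisym: "antisym r" and "(q, q) \<in> r"
      using assms(2) Cons.prems
      by (auto simp: partial_order_on_def preorder_on_def refl_on_def)
    then have "{p\<in>Q. (q', p) \<in> r} \<subset> {p\<in>Q. (q, p) \<in> r}"
      using q' False Cons.prems by (auto dest: transD antisymD)
    then have "card {p\<in>Q. (q', p) \<in> r} < card {p\<in>Q. (q, p) \<in> r}"
      using assms(1) by (intro psubset_card_mono) auto
    then show ?thesis using IH False by (simp add: q'_def)
  qed
qed

lemma ordered_dfa_state_changes_less_card:
  assumes "ordered_complete_dfa X Q \<delta>" and "q \<in> Q" and "u \<in> lists X"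
  shows "state_changes \<delta> q u < card Q"
proof -
  obtain r where "finite Q" and "linear_order_on Q r"
    and "\<forall>p\<in>Q. \<forall>a\<in>X. \<delta> p a \<in> Q \<and> (p, \<delta> p a) \<in> r"
    using assms(1) unfolding ordered_complete_dfa_def by blast
  then have "state_changes \<delta> q u < card {p\<in>Q. (q, p) \<in> r}"
    using assms(2,3) by (intro state_changes_less_card_upset) (auto simp: linear_order_on_def)
  also have "\<dots> \<le> card Q"
    using \<open>finite Q\<close> by (intro card_mono) auto
  finally show ?thesis .
qed

text \<open>The combinatorial shadow of a word without cycle positions for DFAs with at most
\<open>m + 1\<close> states; all DFA hypotheses are dropped.\<close>

definition changes_within :: "nat \<Rightarrow> 'a list \<Rightarrow> bool" where
  "changes_within m w \<longleftrightarrow> (\<forall>j<length w. \<exists>(\<delta> :: nat \<Rightarrow> 'a \<Rightarrow> nat) q.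
      changes_at \<delta> q w j \<and> state_changes \<delta> q (take (Suc j) w) \<le> m)"

lemma changes_within_0_imp_Nil: "changes_within 0 w \<Longrightarrow> w = []"
  by (cases w) (force simp: changes_within_def changes_at_def)+

lemma changes_within_take: "changes_within m w \<Longrightarrow> changes_within m (take p w)"
  by (auto simp: changes_within_def changes_at_def min_def)

lemma changes_within_drop:
  assumes "changes_within (Suc m) w" and "set w \<subseteq> set (take p w)"
  shows "changes_within m (drop p w)"
  unfolding changes_within_def
proof (intro allI impI)
  fix j assume j: "j < length (drop p w)"
  define u where "u = take p w"
  define v where "v = drop p w"
  have J: "p + j < length w"
    using j by simp
  have w: "w = u @ v" and u: "length u = p"
    using J by (simp_all add: u_def v_def)
  obtain \<delta> q where change: "changes_at \<delta> q w (p + j)"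
    and bound: "state_changes \<delta> q (take (Suc (p + j)) w) \<le> Suc m"
    using assms(1) J unfolding changes_within_def by blast
  have "state_changes \<delta> q u \<noteq> 0"
  proof
    assume "state_changes \<delta> q u = 0"
    then have "\<forall>a\<in>set w. \<delta> q a = q"
      using assms(2) by (auto simp: state_changes_eq_0_iff u_def)
    then show False
      using change not_changes_at_if_fixed J by blast
  qed
  moreover have "take (Suc (p + j)) w = u @ take (Suc j) v"
    using u by (simp add: w)
  ultimately have "state_changes \<delta> (run \<delta> q u) (take (Suc j) v) \<le> m"
    using bound by (simp add: state_changes_append)
  moreover have "changes_at \<delta> (run \<delta> q u) v j"
    using change changes_at_append[of \<delta> q u v j] by (simp add: w u)
  ultimately show "\<exists>(\<delta> :: nat \<Rightarrow> 'a \<Rightarrow> nat) q.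
      changes_at \<delta> q (drop p w) j \<and> state_changes \<delta> q (take (Suc j) (drop p w)) \<le> m"
    unfolding v_def by blast
qed

lemma last_new_letter:
  assumes "w \<noteq> []"
  shows "\<exists>p<length w. set (take p w) \<subset> set w \<and> set w \<subseteq> set (take (Suc p) w)"
  using assms
proof (induction w rule: rev_induct)
  case Nil
  then show ?case by simp
next
  case (snoc a v)
  show ?case
  proof (cases "a \<in> set v")
    case True
    then have "v \<noteq> []" by auto
    then obtain p where "p < length v" "set (take p v) \<subset> set v" "set v \<subseteq> set (take (Suc p) v)"
      using snoc.IH by blast
    then show ?thesis
      using True by (intro exI[of _ p]) auto
  next
    case False
    then show ?thesis
      by (intro exI[of _ "length v"]) auto
  qed
qed

lemma one_plus_sum_powers_le: "1 + (\<Sum>i=1..k. x ^ i) \<le> (x + 1 :: nat) ^ k"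
proof (induction k)
  case 0
  then show ?case by simp
next
  case (Suc k)
  have "1 + (\<Sum>i=1..Suc k. x ^ i) = (1 + (\<Sum>i=1..k. x ^ i)) + x * x ^ k"
    by simp
  also have "\<dots> \<le> (x + 1) ^ k + x * (x + 1) ^ k"
    using Suc.IH by (intro add_mono mult_le_mono2 power_mono) auto
  also have "\<dots> = (x + 1) ^ Suc k"
    by simp
  finally show ?case .
qed

lemma changes_within_length_le:
  "changes_within m w \<Longrightarrow> card (set w) \<le> k \<Longrightarrow> length w \<le> (\<Sum>i=1..k. m ^ i)"
proof (induction m arbitrary: k w)
  case 0
  then have "w = []" using changes_within_0_imp_Nil by blast
  then show ?case by simp
next
  case (Suc m)
  note IH_changes = Suc.IH
  from Suc.prems show ?case
  proof (induction k arbitrary: w)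
    case 0
    then show ?case by simp
  next
    case (Suc k)
    show ?case
    proof (cases "w = []")
      case False
      then obtain p where p: "p < length w" "set (take p w) \<subset> set w"
        "set w \<subseteq> set (take (Suc p) w)"
        using last_new_letter by blast
      have "card (set (take p w)) < card (set w)"
        using p(2) by (intro psubset_card_mono) auto
      then have "length (take p w) \<le> (\<Sum>i=1..k. Suc m ^ i)"
        using Suc.prems by (intro Suc.IH changes_within_take) auto
      moreover have "card (set (drop (Suc p) w)) \<le> Suc k"
        using Suc.prems(2) card_mono[OF _ set_drop_subset] by (meson List.finite_set le_trans)
      then have "length (drop (Suc p) w) \<le> (\<Sum>i=1..Suc k. m ^ i)"
        using Suc.prems(1) p(3) by (intro IH_changes changes_within_drop)
      moreover have "1 + (\<Sum>i=1..Suc k. m ^ i) \<le> Suc m ^ Suc k"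
        using one_plus_sum_powers_le[where k = "Suc k" and x = m] by simp
      ultimately show ?thesis
        using p(1) by simp
    qed simp
  qed
qed

lemma exists_cycle_position:
  assumes "finite X" and "w \<in> lists X" and "length w > (\<Sum>i=1..card X. (n - 1) ^ i)"
  shows "\<exists>j<length w. cycles_at X n w j"
proof (rule ccontr)
  assume no_cycle: "\<not> ?thesis"
  have "changes_within (n - 1) w"
    unfolding changes_within_def
  proof (intro allI impI)
    fix j assume j: "j < length w"
    then obtain Q \<delta> q where dfa: "ordered_complete_dfa X Q \<delta>" "card Q \<le> n" "q \<in> Q"
      and change: "changes_at \<delta> q w j"
      using no_cycle unfolding cycles_at_def changes_at_def by blast
    have "take (Suc j) w \<in> lists X"
      using assms(2) by (auto dest: in_set_takeD)
    then have "state_changes \<delta> q (take (Suc j) w) \<le> n - 1"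
      using ordered_dfa_state_changes_less_card[OF dfa(1,3)] dfa(2) by fastforce
    then show "\<exists>(\<delta> :: nat \<Rightarrow> 'a \<Rightarrow> nat) q.
        changes_at \<delta> q w j \<and> state_changes \<delta> q (take (Suc j) w) \<le> n - 1"
      using change by blast
  qed
  moreover have "card (set w) \<le> card X"
    using assms(1,2) by (intro card_mono) auto
  ultimately have "length w \<le> (\<Sum>i=1..card X. (n - 1) ^ i)"
    by (rule changes_within_length_le)
  with assms(3) show False by simp
qed

lemma sum_powers_le: "(\<Sum>i=1..k. m ^ i) \<le> k * (m :: nat) ^ k"
proof -
  have "m ^ i \<le> m ^ k" if "i \<in> {1..k}" for i
    using that by (cases "m = 0") (auto simp: power_0_left intro: power_increasing)
  then have "(\<Sum>i=1..k. m ^ i) \<le> (\<Sum>i=1..k. m ^ k)"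
    by (rule sum_mono)
  then show ?thesis by simp
qed

theorem mainTheorem4:
  fixes X :: "'a set" and k n :: nat
  assumes "finite X" and "card X = k" and "k \<ge> 1" and "n \<ge> 1"
  shows "(\<forall>w\<in>lists X. length w > k * (n - 1) ^ k \<longrightarrow>
            (\<exists>j < length w. cycles_at X n w j))
       \<and> (\<forall>w\<in>lists X. length w > (\<Sum>i=1..k. (n - 1) ^ i) \<longrightarrow>
            (\<exists>j < length w. cycles_at X n w j))"
  using exists_cycle_position[OF assms(1)] sum_powers_le[where k = k and m = "n - 1"]
  unfolding assms(2) by (meson le_less_trans)

end
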